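(* For $n\ge2$, let $b_n$ be the number of permutations in $\mathcal S_n$ that contain $(123,\emptyset,\{0,1\})$. Then $b_n=\frac12(n-1)!\,(n-2)$.
   Context: For $n\ge1$, $\mathcal S_n$ is the set of permutations $\pi=\pi_1\cdots\pi_n$ of $[n]$. A bi-vincular pattern of length $k$ is a triple $p=(\sigma,X,Y)$ with $\sigma\in\mathcal S_k$ and $X,Y\subseteq\{0,1,\dots,k\}$. A permutation $\pi\in\mathcal S_n$ contains $p$ if there are indices $1\le i_1<\dots<i_k\le n$ such that $(\pi_{i_1},\dots,\pi_{i_k})$ is order-isomorphic to $\sigma$ and, letting $j_1<\dots<j_k$ be the values $\pi_{i_1},\dots,\pi_{i_k}$ sorted increasingly and setting $i_0=j_0=0$, $i_{k+1}=j_{k+1}=n+1$, one has $i_{x+1}=i_x+1$ for all $x\in X$ and $j_{y+1}=j_y+1$ for all $y\in Y$. *)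

theory Defs
  imports Main "HOL-Combinatorics.Multiset_Permutations"
begin

text \<open>A permutation p of [n] is a list of length n (one-line notation), pi_i = p ! (i - 1).
  A bi-vincular pattern is (sigma, X, Y) with sigma a list (one-line notation of a permutation of [k]).
  The index function i is 1-based on positions 1..k; positions/values are extended by
  i_0 = j_0 = 0 and i_(k+1) = j_(k+1) = n + 1.\<close>

definition contains_bv :: "nat list \<Rightarrow> nat list \<Rightarrow> nat set \<Rightarrow> nat set \<Rightarrow> bool" where
  "contains_bv p sigma X Y \<longleftrightarrow>
     (let n = length p; k = length sigma in
      \<exists>i :: nat \<Rightarrow> nat.
        (\<forall>a \<in> {1..k}. 1 \<le> i a \<and> i a \<le> n) \<and>
        (\<forall>a \<in> {1..k}. \<forall>b \<in> {1..k}. a < b \<longrightarrow> i a < i b) \<and>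
        (\<forall>a \<in> {1..k}. \<forall>b \<in> {1..k}.
            (p ! (i a - 1) < p ! (i b - 1) \<longleftrightarrow> sigma ! (a - 1) < sigma ! (b - 1))) \<and>
        (let vals = sort (map (\<lambda>a. p ! (i a - 1)) [1..<k+1]);
             ie = (\<lambda>x. if x = 0 then 0 else if x = k + 1 then n + 1 else i x);
             je = (\<lambda>x. if x = 0 then 0 else if x = k + 1 then n + 1 else vals ! (x - 1))
         in (\<forall>x \<in> X. ie (x + 1) = ie x + 1) \<and> (\<forall>y \<in> Y. je (y + 1) = je y + 1)))"

end

(* The adjacency constraints Y = {0,1} force the two smallest values of an occurrence of 123
   to be 1 and 2, and any later entry is larger than 2.  So a permutation of [n] contains
   (123, {}, {0,1}) iff 1 precedes 2 and 2 is not the last entry.  Exchanging the values 1 and 2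
   shows that 1 precedes 2 in exactly n!/2 permutations, and 2 is last in (n-1)! of them, which
   leaves n!/2 - (n-1)! = (n-1)! (n-2)/2. *)

theory Submission
  imports Defs
begin

definition occurs_before :: "'a list \<Rightarrow> 'a \<Rightarrow> 'a \<Rightarrow> bool" where
  "occurs_before xs u v \<longleftrightarrow> (\<exists>i j. i < j \<and> j < length xs \<and> xs ! i = u \<and> xs ! j = v)"

lemma occurs_before_map: "occurs_before xs u v \<Longrightarrow> occurs_before (map f xs) (f u) (f v)"
  unfolding occurs_before_def by force

lemma occurs_before_asym: "distinct xs \<Longrightarrow> occurs_before xs u v \<Longrightarrow> \<not> occurs_before xs v u"
  unfolding occurs_before_def by (metis less_trans nth_eq_iff_index_eq order.asym)

lemma occurs_before_total:
  "u \<in> set xs \<Longrightarrow> v \<in> set xs \<Longrightarrow> u \<noteq> v \<Longrightarrow> occurs_before xs u v \<or> occurs_before xs v u"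
  unfolding occurs_before_def in_set_conv_nth by (metis linorder_neqE_nat)

lemma occurs_before_last:
  assumes "u \<in> set xs" "u \<noteq> last xs"
  shows "occurs_before xs u (last xs)"
proof -
  obtain i where i: "i < length xs" "xs ! i = u" using assms(1) by (auto simp: in_set_conv_nth)
  have "xs \<noteq> []" using assms(1) by auto
  then have "last xs = xs ! (length xs - 1)" by (rule last_conv_nth)
  with i assms(2) have "i \<noteq> length xs - 1" by auto
  with i have "i < length xs - 1" by linarith
  with i \<open>last xs = _\<close> show ?thesis
    unfolding occurs_before_def by (intro exI[of _ i] exI[of _ "length xs - 1"]) auto
qed

lemma card_permutations_of_set_occurs_before:
  assumes "finite A" "u \<in> A" "v \<in> A" "u \<noteq> v"
  shows "2 * card {xs \<in> permutations_of_set A. occurs_before xs u v} = fact (card A)"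
proof -
  define before where "before x y = {xs \<in> permutations_of_set A. occurs_before xs x y}" for x y
  define \<tau> where "\<tau> = Transposition.transpose u v"
  have "\<tau> permutes A" unfolding \<tau>_def by (simp add: assms permutes_swap_id)
  then have "map \<tau> xs \<in> permutations_of_set A" if "xs \<in> permutations_of_set A" for xs
    using permutations_of_set_image_permutes that by blast
  then have map_before: "map \<tau> ` before x y \<subseteq> before (\<tau> x) (\<tau> y)" for x y
    by (auto simp: before_def occurs_before_map)
  have "before v u = map \<tau> ` map \<tau> ` before v u"
    by (simp add: image_image \<tau>_def map_idI)
  also have "\<dots> \<subseteq> map \<tau> ` before u v"
    using map_before[of v u] by (intro image_mono) (simp add: \<tau>_def)
  finally have "map \<tau> ` before u v = before v u"
    using map_before[of u v] by (auto simp: \<tau>_def)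
  moreover have "inj (map \<tau>)" by (simp add: \<tau>_def inj_transpose)
  ultimately have same_card: "card (before u v) = card (before v u)"
    by (metis card_image inj_on_subset top_greatest)
  have "before u v \<union> before v u = permutations_of_set A"
    using assms occurs_before_total by (fastforce simp: before_def dest: permutations_of_setD)
  moreover have "xs \<notin> before v u" if "xs \<in> before u v" for xs
    using that occurs_before_asym[of xs u v] by (simp add: before_def permutations_of_set_def)
  then have "before u v \<inter> before v u = {}" by blast
  ultimately have "card (before u v) + card (before v u) = card (permutations_of_set A)"
    by (metis card_Un_disjoint finite_Un finite_permutations_of_set)
  with same_card assms(1) show ?thesis
    unfolding before_def by (metis card_permutations_of_set mult_2)
qed

lemma permutations_of_set_last_eq:
  assumes "v \<in> A"
  shows "{xs \<in> permutations_of_set A. last xs = v} = (\<lambda>ys. ys @ [v]) ` permutations_of_set (A - {v})"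
proof
  show "{xs \<in> permutations_of_set A. last xs = v} \<subseteq> (\<lambda>ys. ys @ [v]) ` permutations_of_set (A - {v})"
  proof
    fix xs assume "xs \<in> {xs \<in> permutations_of_set A. last xs = v}"
    then have xs: "xs \<in> permutations_of_set A" and v: "last xs = v" by auto
    have "xs \<noteq> []" using xs assms by (auto dest: permutations_of_setD)
    then have split: "xs = butlast xs @ [v]" using v by (metis append_butlast_last_id)
    have "distinct (butlast xs @ [v])" "set (butlast xs @ [v]) = A"
      using xs split by (metis permutations_of_setD)+
    then have "butlast xs \<in> permutations_of_set (A - {v})" by (intro permutations_of_setI) auto
    with split show "xs \<in> (\<lambda>ys. ys @ [v]) ` permutations_of_set (A - {v})" by blast
  qed
  show "(\<lambda>ys. ys @ [v]) ` permutations_of_set (A - {v}) \<subseteq> {xs \<in> permutations_of_set A. last xs = v}"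
  proof
    fix xs assume "xs \<in> (\<lambda>ys. ys @ [v]) ` permutations_of_set (A - {v})"
    then obtain ys where "xs = ys @ [v]" "set ys = A - {v}" "distinct ys"
      by (auto dest: permutations_of_setD)
    with assms have "set xs = A" "distinct xs" "last xs = v" by auto
    then show "xs \<in> {xs \<in> permutations_of_set A. last xs = v}" by blast
  qed
qed

lemma card_permutations_of_set_last:
  assumes "finite A" "v \<in> A"
  shows "card {xs \<in> permutations_of_set A. last xs = v} = fact (card A - 1)"
  using assms by (simp add: permutations_of_set_last_eq card_image inj_on_def card_Diff_singleton)

lemma contains_bv_123_0_1_iff:
  "contains_bv p [1,2,3] {} {0,1} \<longleftrightarrow>
     (\<exists>a b c. a < b \<and> b < c \<and> c < length p \<and> p ! a = 1 \<and> p ! b = 2 \<and> 2 < p ! c)"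
proof -
  define val where "val i = sort (map (\<lambda>x. p ! (i x - 1)) [1..<3+1])" for i :: "nat \<Rightarrow> nat"
  define je where
    "je i y = (if y = 0 then 0 else if y = 3 + 1 then length p + 1 else val i ! (y - 1))" for i y
  have len: "length [1,2,3::nat] = 3" and upto3: "[1..<3+1] = [1,2,3::nat]" by (simp_all add: upt_rec)
  show ?thesis
  proof
    assume "contains_bv p [1,2,3] {} {0,1}"
    then obtain i where
      range: "\<forall>x \<in> {1..3}. 1 \<le> i x \<and> i x \<le> length p" and
      mono: "\<forall>x \<in> {1..3}. \<forall>y \<in> {1..3::nat}. x < y \<longrightarrow> i x < i y" and
      order: "\<forall>x \<in> {1..3}. \<forall>y \<in> {1..3::nat}.
        p ! (i x - 1) < p ! (i y - 1) \<longleftrightarrow> [1,2,3::nat] ! (x - 1) < [1,2,3] ! (y - 1)" and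
      gaps: "\<forall>y \<in> {0,1::nat}. je i (y + 1) = je i y + 1"
      unfolding contains_bv_def Let_def len by (elim exE conjE) (rule that; (unfold je_def val_def)?)
    have pos: "1 \<le> i 1" "i 1 < i 2" "i 2 < i 3" "i 3 \<le> length p" using range mono by auto
    have incr: "p ! (i 1 - 1) < p ! (i 2 - 1)" "p ! (i 2 - 1) < p ! (i 3 - 1)" using order by auto
    then have "val i = [p ! (i 1 - 1), p ! (i 2 - 1), p ! (i 3 - 1)]"
      unfolding val_def upto3 by (simp add: sorted_sort_id)
    with gaps incr have "p ! (i 1 - 1) = 1" "p ! (i 2 - 1) = 2" "2 < p ! (i 3 - 1)"
      by (auto simp: je_def)
    with pos show "\<exists>a b c. a < b \<and> b < c \<and> c < length p \<and> p ! a = 1 \<and> p ! b = 2 \<and> 2 < p ! c"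
      by (intro exI[of _ "i 1 - 1"] exI[of _ "i 2 - 1"] exI[of _ "i 3 - 1"]) auto
  next
    assume "\<exists>a b c. a < b \<and> b < c \<and> c < length p \<and> p ! a = 1 \<and> p ! b = 2 \<and> 2 < p ! c"
    then obtain a b c where abc: "a < b" "b < c" "c < length p" "p ! a = 1" "p ! b = 2" "2 < p ! c"
      by blast
    define i where "i x = (if x = 1 then a + 1 else if x = 2 then b + 1 else c + 1)" for x :: nat
    have "val i = [1, 2, p ! c]"
      using abc unfolding val_def upto3 by (simp add: i_def sorted_sort_id)
    with abc have "\<forall>y \<in> {0,1::nat}. je i (y + 1) = je i y + 1" by (simp add: je_def)
    with abc show "contains_bv p [1,2,3] {} {0,1}"
      unfolding contains_bv_def Let_def len je_def val_def
      by (intro exI[of _ i]) (auto simp: i_def)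
  qed
qed

lemma contains_bv_123_0_1_iff_occurs_before:
  assumes "distinct p" "0 \<notin> set p"
  shows "contains_bv p [1,2,3] {} {0,1} \<longleftrightarrow> occurs_before p 1 2 \<and> last p \<noteq> 2"
  unfolding contains_bv_123_0_1_iff
proof
  assume "\<exists>a b c. a < b \<and> b < c \<and> c < length p \<and> p ! a = 1 \<and> p ! b = 2 \<and> 2 < p ! c"
  then obtain a b c where abc: "a < b" "b < c" "c < length p" "p ! a = 1" "p ! b = 2" "2 < p ! c"
    by blast
  then have "occurs_before p 1 2" unfolding occurs_before_def by (intro exI[of _ a] exI[of _ b]) auto
  moreover have "last p \<noteq> 2"
  proof
    assume "last p = 2"
    moreover have "last p = p ! (length p - 1)" using abc by (intro last_conv_nth) auto
    ultimately have "p ! (length p - 1) = p ! b" using abc by simp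
    then have "length p - 1 = b" using nth_eq_iff_index_eq[OF assms(1), of "length p - 1" b] abc by simp
    with abc show False by linarith
  qed
  ultimately show "occurs_before p 1 2 \<and> last p \<noteq> 2" ..
next
  assume "occurs_before p 1 2 \<and> last p \<noteq> 2"
  then obtain a b where ab: "a < b" "b < length p" "p ! a = 1" "p ! b = 2" and last: "last p \<noteq> 2"
    unfolding occurs_before_def by blast
  define c where "c = length p - 1"
  have c: "c < length p" using ab by (simp add: c_def)
  have "p \<noteq> []" using ab by auto
  then have pc: "p ! c = last p" by (simp add: c_def last_conv_nth)
  with ab last have "b \<noteq> c" by auto
  with ab have "b < c" unfolding c_def by linarith
  moreover have "p ! c \<noteq> p ! a"
    using ab c \<open>b < c\<close> by (subst nth_eq_iff_index_eq[OF assms(1)]) auto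
  moreover have "p ! c \<noteq> 0" using nth_mem[OF c] assms(2) by metis
  ultimately show "\<exists>a b c. a < b \<and> b < c \<and> c < length p \<and> p ! a = 1 \<and> p ! b = 2 \<and> 2 < p ! c"
    using ab last pc c by (intro exI[of _ a] exI[of _ b] exI[of _ c]) auto
qed

lemma card_permutations_of_set_occurs_before_not_last:
  assumes "finite A" "u \<in> A" "v \<in> A" "u \<noteq> v"
  shows "2 * card {xs \<in> permutations_of_set A. occurs_before xs u v \<and> last xs \<noteq> v}
           = (card A - 2) * fact (card A - 1)"
proof -
  define B where "B = {xs \<in> permutations_of_set A. occurs_before xs u v}"
  define L where "L = {xs \<in> permutations_of_set A. last xs = v}"
  define S where "S = {xs \<in> permutations_of_set A. occurs_before xs u v \<and> last xs \<noteq> v}"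
  have "L \<subseteq> B"
  proof
    fix xs assume "xs \<in> L"
    then have "xs \<in> permutations_of_set A" "last xs = v" "u \<in> set xs"
      using assms(2) by (auto simp: L_def dest: permutations_of_setD)
    then show "xs \<in> B" using occurs_before_last[of u xs] assms(4) by (simp add: B_def)
  qed
  moreover have "finite L" by (simp add: L_def)
  moreover have "S = B - L" by (auto simp: S_def B_def L_def)
  ultimately have "card S = card B - card L" by (simp add: card_Diff_subset)
  then have "2 * card S = 2 * card B - 2 * card L" by simp
  also have "2 * card B = card A * fact (card A - 1)"
  proof -
    have "card A > 0" using assms(1,2) card_gt_0_iff by blast
    then have "fact (card A) = card A * fact (card A - 1)" by (simp add: fact_reduce)
    with card_permutations_of_set_occurs_before[OF assms] show ?thesis by (simp add: B_def)
  qed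
  also have "card L = fact (card A - 1)"
    using card_permutations_of_set_last[OF assms(1,3)] by (simp add: L_def)
  also have "card A * fact (card A - 1) - 2 * fact (card A - 1) = (card A - 2) * fact (card A - 1)"
    by (simp add: diff_mult_distrib)
  finally show ?thesis by (simp add: S_def)
qed

theorem mainTheorem12:
  fixes n :: nat
  assumes "n \<ge> 2"
  shows "real (card {p \<in> permutations_of_set {1..n}. contains_bv p [1,2,3] {} {0,1}})
           = 1/2 * fact (n - 1) * real (n - 2)"
proof -
  have "contains_bv p [1,2,3] {} {0,1} \<longleftrightarrow> occurs_before p 1 2 \<and> last p \<noteq> 2"
    if "p \<in> permutations_of_set {1..n}" for p
    using permutations_of_setD[OF that] by (intro contains_bv_123_0_1_iff_occurs_before) auto
  then have contains_eq: "{p \<in> permutations_of_set {1..n}. contains_bv p [1,2,3] {} {0,1}}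
      = {p \<in> permutations_of_set {1..n}. occurs_before p 1 2 \<and> last p \<noteq> 2}"
    by auto
  have "2 * card {p \<in> permutations_of_set {1..n}. occurs_before p 1 2 \<and> last p \<noteq> 2}
      = (card {1..n} - 2) * fact (card {1..n} - 1)"
    by (rule card_permutations_of_set_occurs_before_not_last) (use assms in simp_all)
  then have "2 * card {p \<in> permutations_of_set {1..n}. contains_bv p [1,2,3] {} {0,1}}
      = (n - 2) * fact (n - 1)"
    unfolding contains_eq by (simp only: card_atLeastAtMost diff_Suc_1)
  then have "real (2 * card {p \<in> permutations_of_set {1..n}. contains_bv p [1,2,3] {} {0,1}})
      = real ((n - 2) * fact (n - 1))"
    by (rule arg_cong)
  then show ?thesis by (simp add: mult_ac)
qed

end
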